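(* Let $d\geq 1$, let $p=p_d=\frac{2d+1}{4d}$, let $(S_n)$ be the $d$-dimensional elephant random walk with memory parameter $p$, and let $G_n=\frac{1}{n}\sum_{k=1}^n S_k$. Then $$\lim_{n\to\infty}\frac{1}{\sqrt{n}\log n}G_n=0\quad\text{a.s.}$$
   Context: The $d$-dimensional elephant random walk (ERW) with memory parameter $p\in[0,1]$ is defined as follows. Let $e_1,\dots,e_d$ be the standard basis of $\mathbb{R}^d$; the $2d$ directions are $\pm e_1,\dots,\pm e_d$. Set $S_0=0$. The first step $X_1$ is uniformly distributed on the $2d$ directions. For $n\geq 1$, given $X_1,\dots,X_n$, an index $k$ is chosen uniformly at random in $\{1,\dots,n\}$, and then $X_{n+1}=X_k$ with probability $p$, while $X_{n+1}$ equals each of the $2d-1$ remaining directions with probability $(1-p)/(2d-1)$. The position is $S_{n+1}=S_n+X_{n+1}$. The case $p=p_d$ is the critical regime. *)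

theory Defs
  imports "HOL-Probability.Probability"
begin

text \<open>The 2d directions of the d-dimensional ERW, d = CARD('d): the pair (i, b)
  stands for +e_i if b = True and -e_i if b = False.\<close>

definition dirvec :: "'d::finite \<times> bool \<Rightarrow> real ^ 'd" where
  "dirvec u = (\<chi> j. if j = fst u then (if snd u then 1 else -1) else 0)"

text \<open>Conditional probability that step n+1 equals y, given steps x 1, ..., x n.\<close>
definition erw_trans :: "real \<Rightarrow> nat \<Rightarrow> (nat \<Rightarrow> 'd::finite \<times> bool) \<Rightarrow> 'd \<times> bool \<Rightarrow> real" where
  "erw_trans p n x y =
     (1 / real n) * (\<Sum>k\<in>{1..n}. if x k = y then p else (1 - p) / (2 * real CARD('d) - 1))"

text \<open>Probability that the first n steps are x 1, ..., x n (n >= 1).\<close>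
definition erw_prob :: "real \<Rightarrow> nat \<Rightarrow> (nat \<Rightarrow> 'd::finite \<times> bool) \<Rightarrow> real" where
  "erw_prob p n x = (1 / (2 * real CARD('d))) * (\<Prod>m\<in>{1..<n}. erw_trans p m x (x (Suc m)))"

text \<open>X k (k >= 1) are the steps of a d-dimensional elephant random walk with memory
  parameter p on the probability space M (the law is given by its finite-dimensional
  distributions; X 0 is irrelevant).\<close>
definition is_erw :: "'a measure \<Rightarrow> real \<Rightarrow> (nat \<Rightarrow> 'a \<Rightarrow> 'd::finite \<times> bool) \<Rightarrow> bool" where
  "is_erw M p X \<longleftrightarrow> prob_space M \<and> 0 \<le> p \<and> p \<le> 1 \<and>
     (\<forall>k. X k \<in> measurable M (count_space UNIV)) \<and>
     (\<forall>n\<ge>1. \<forall>x. measure M {\<omega>\<in>space M. \<forall>k\<in>{1..n}. X k \<omega> = x k} = erw_prob p n x)"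

definition erw_S :: "(nat \<Rightarrow> 'a \<Rightarrow> 'd::finite \<times> bool) \<Rightarrow> nat \<Rightarrow> 'a \<Rightarrow> real ^ 'd" where
  "erw_S X n \<omega> = (\<Sum>k\<in>{1..n}. dirvec (X k \<omega>))"

definition erw_G :: "(nat \<Rightarrow> 'a \<Rightarrow> 'd::finite \<times> bool) \<Rightarrow> nat \<Rightarrow> 'a \<Rightarrow> real ^ 'd" where
  "erw_G X n \<omega> = (1 / real n) *\<^sub>R (\<Sum>k\<in>{1..n}. erw_S X k \<omega>)"

end

theory Submission
  imports Defs "HOL-Probability.Hoeffding" "HOL-Real_Asymp.Real_Asymp"
begin

(* At the critical memory parameter every coordinate S_n of the walk has conditional drift
   S_n / (2n), so M_n = S_n / gamma_n with gamma_n = prod_{k<n} (1 + 1/(2k)), which is of order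
   sqrt n, is a martingale whose increments are bounded by 3 / (2 gamma_{n+1}). By the
   Azuma-Hoeffding inequality, the deviation of M from time 1 to 2^j (variance proxy O(j)) and
   its oscillation on the dyadic block [2^j, 2^(j+1)] (variance proxy O(1)) exceed eps * j only
   with summable probabilities. Borel-Cantelli then gives M_k = o(log k) almost surely, that is
   S_k = o(sqrt k log k), and averaging preserves this bound for G_n. *)

section \<open>Exponential moment inequalities\<close>

lemma cosh_le_exp_half_square: "cosh (a::real) \<le> exp (a\<^sup>2 / 2)"
proof -
  define b where "b = \<bar>a\<bar>"
  have b: "b \<ge> 0" "a\<^sup>2 = b\<^sup>2" "cosh a = cosh b"
    unfolding b_def by (auto simp: abs_if)
  have "- (2 * b) * (1 / 2) + ln (1 + 1 / 2 * (exp (2 * b) - 1)) \<le> (2 * b)\<^sup>2 / 8"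
    using Hoeffdings_lemma_aux[of "2 * b" "1 / 2"] b by simp
  moreover have "1 + 1 / 2 * (exp (2 * b) - 1) = exp b * cosh b"
    by (simp add: cosh_field_def field_simps flip: exp_add)
  ultimately have "ln (exp b * cosh b) \<le> b + b\<^sup>2 / 2"
    by (simp add: power2_eq_square)
  moreover have "cosh b > 0"
    by (simp add: cosh_field_def add_pos_pos)
  ultimately have "b + ln (cosh b) \<le> b + b\<^sup>2 / 2"
    by (simp add: ln_mult)
  then have "ln (cosh b) \<le> b\<^sup>2 / 2"
    by simp
  then have "cosh b \<le> exp (b\<^sup>2 / 2)"
    using \<open>cosh b > 0\<close> by (metis exp_ln exp_le_cancel_iff)
  then show ?thesis
    using b(2,3) by (simp only:)
qed

text \<open>By convexity \<open>exp (l * u)\<close> lies below its chord over \<open>[-c, c]\<close>, whose \<open>T\<close>-mean is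
  \<open>cosh (l * c)\<close> because \<open>D\<close> has mean zero.\<close>

lemma hoeffding_lemma_finite_sum:
  fixes T D :: "'b \<Rightarrow> real"
  assumes "finite Y" and T_nonneg: "\<And>y. y \<in> Y \<Longrightarrow> T y \<ge> 0" and T_sum: "(\<Sum>y\<in>Y. T y) = 1"
    and mean: "(\<Sum>y\<in>Y. T y * D y) = 0" and D_le: "\<And>y. y \<in> Y \<Longrightarrow> \<bar>D y\<bar> \<le> c" and "c > 0"
  shows "(\<Sum>y\<in>Y. T y * exp (l * D y)) \<le> exp (l\<^sup>2 * c\<^sup>2 / 2)"
proof -
  define chord where "chord u = (c - u) / (2 * c) * exp (- (l * c)) + (c + u) / (2 * c) * exp (l * c)" for u
  have exp_le_chord: "exp (l * D y) \<le> chord (D y)" if "y \<in> Y" for y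
  proof -
    define s where "s = (c + D y) / (2 * c)"
    have "0 \<le> s" "s \<le> 1"
      using D_le[OF that] \<open>c > 0\<close> unfolding s_def by (auto simp: abs_le_iff field_simps)
    moreover have "(1 - s) * (- (l * c)) + s * (l * c) = l * D y" "1 - s = (c - D y) / (2 * c)"
      using \<open>c > 0\<close> unfolding s_def by (simp_all add: field_simps)
    ultimately show ?thesis
      using convex_onD[OF exp_convex, of s "- (l * c)" "l * c"] unfolding chord_def s_def by simp
  qed
  have "(\<Sum>y\<in>Y. T y * exp (l * D y)) \<le> (\<Sum>y\<in>Y. T y * chord (D y))"
    by (intro sum_mono mult_left_mono exp_le_chord T_nonneg)
  also have "\<dots> = (\<Sum>y\<in>Y. T y * ((exp (- (l * c)) + exp (l * c)) / 2)
      + T y * D y * ((exp (l * c) - exp (- (l * c))) / (2 * c)))"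
    using \<open>c > 0\<close> unfolding chord_def by (intro sum.cong refl) (simp add: field_simps)
  also have "\<dots> = (\<Sum>y\<in>Y. T y) * ((exp (- (l * c)) + exp (l * c)) / 2)
      + (\<Sum>y\<in>Y. T y * D y) * ((exp (l * c) - exp (- (l * c))) / (2 * c))"
    by (simp only: sum.distrib sum_distrib_right)
  also have "\<dots> = cosh (l * c)"
    unfolding T_sum mean by (simp add: cosh_field_def add.commute)
  also have "\<dots> \<le> exp (l\<^sup>2 * c\<^sup>2 / 2)"
    using cosh_le_exp_half_square[of "l * c"] by (simp add: power_mult_distrib)
  finally show ?thesis .
qed

lemma chernoff_two_sided_finite_sum:
  fixes w Z :: "'b \<Rightarrow> real"
  assumes "finite P" and w_nonneg: "\<And>x. x \<in> P \<Longrightarrow> w x \<ge> 0"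
    and mgf: "\<And>l. (\<Sum>x\<in>P. w x * exp (l * Z x)) \<le> exp (l\<^sup>2 / 2 * V)"
    and "V > 0" "t \<ge> 0"
  shows "(\<Sum>x\<in>{x\<in>P. t \<le> \<bar>Z x\<bar>}. w x) \<le> 2 * exp (- (t\<^sup>2) / (2 * V))"
proof -
  define l where "l = t / V"
  have "l \<ge> 0"
    using assms unfolding l_def by simp
  define F where "F x = exp (l * Z x - l * t) + exp (- l * Z x - l * t)" for x
  have one_le_F: "1 \<le> F x" if "t \<le> \<bar>Z x\<bar>" for x
  proof (cases "t \<le> Z x")
    case True
    then have "1 \<le> exp (l * Z x - l * t)"
      using \<open>l \<ge> 0\<close> mult_left_mono[of t "Z x" l] by simp
    then show ?thesis
      unfolding F_def by (rule add_increasing2[OF exp_ge_zero])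
  next
    case False
    then have "1 \<le> exp (- l * Z x - l * t)"
      using that \<open>l \<ge> 0\<close> mult_left_mono[of t "- Z x" l] by simp
    then show ?thesis
      unfolding F_def by (rule add_increasing[OF exp_ge_zero])
  qed
  have "(\<Sum>x\<in>{x\<in>P. t \<le> \<bar>Z x\<bar>}. w x) \<le> (\<Sum>x\<in>{x\<in>P. t \<le> \<bar>Z x\<bar>}. w x * F x)"
  proof (rule sum_mono)
    fix x assume "x \<in> {x\<in>P. t \<le> \<bar>Z x\<bar>}"
    then show "w x \<le> w x * F x"
      using w_nonneg[of x] one_le_F[of x] mult_left_mono[of 1 "F x" "w x"] by simp
  qed
  also have "\<dots> \<le> (\<Sum>x\<in>P. w x * F x)"
    using \<open>finite P\<close> w_nonneg by (intro sum_mono2) (auto simp: F_def)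
  also have "\<dots> = exp (- (l * t)) * ((\<Sum>x\<in>P. w x * exp (l * Z x)) + (\<Sum>x\<in>P. w x * exp (- l * Z x)))"
    unfolding F_def sum.distrib[symmetric] sum_distrib_left
    by (intro sum.cong refl) (simp add: algebra_simps flip: exp_add)
  also have "\<dots> \<le> exp (- (l * t)) * (2 * exp (l\<^sup>2 / 2 * V))"
    using mgf[of l] mgf[of "- l"] by simp
  also have "\<dots> = 2 * exp (- (t\<^sup>2) / (2 * V))"
    using \<open>V > 0\<close> unfolding l_def by (simp add: field_simps power2_eq_square flip: exp_add)
  finally show ?thesis .
qed

section \<open>Coordinates of the walk and the normalised martingale\<close>

lemma dirvec_nth: "dirvec u $ i = (if i = fst u then (if snd u then 1 else -1) else 0)"
  by (simp add: dirvec_def)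

lemma abs_dirvec_nth_le: "\<bar>dirvec u $ i\<bar> \<le> 1"
  by (simp add: dirvec_nth)

lemma sum_dirvec_nth: "(\<Sum>u\<in>UNIV. dirvec u $ (i::'d::finite)) = 0"
proof -
  have "(\<Sum>u\<in>UNIV. dirvec u $ i) = (\<Sum>j\<in>UNIV. \<Sum>b\<in>UNIV. dirvec (j, b) $ i)"
    by (simp add: UNIV_Times_UNIV[symmetric] sum.cartesian_product del: UNIV_Times_UNIV)
  also have "\<dots> = 0"
    by (intro sum.neutral) (auto simp: dirvec_nth UNIV_bool)
  finally show ?thesis .
qed

definition walk_coord :: "'d::finite \<Rightarrow> nat \<Rightarrow> (nat \<Rightarrow> 'd \<times> bool) \<Rightarrow> real" where
  "walk_coord i n x = (\<Sum>k\<in>{1..n}. dirvec (x k) $ i)"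

lemma abs_walk_coord_le: "\<bar>walk_coord i n x\<bar> \<le> real n"
proof -
  have "\<bar>walk_coord i n x\<bar> \<le> (\<Sum>k\<in>{1..n}. \<bar>dirvec (x k) $ i\<bar>)"
    unfolding walk_coord_def by (rule sum_abs)
  also have "\<dots> \<le> (\<Sum>k\<in>{1..n}. 1)"
    by (intro sum_mono abs_dirvec_nth_le)
  finally show ?thesis by simp
qed

lemma walk_coord_cong: "(\<And>k. k \<in> {1..n} \<Longrightarrow> x k = x' k) \<Longrightarrow> walk_coord i n x = walk_coord i n x'"
  unfolding walk_coord_def by (intro sum.cong) auto

lemma walk_coord_Suc: "walk_coord i (Suc n) x = walk_coord i n x + dirvec (x (Suc n)) $ i"
  unfolding walk_coord_def by simp

definition erw_scale :: "nat \<Rightarrow> real" where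
  "erw_scale n = (\<Prod>k\<in>{1..<n}. 1 + 1 / (2 * real k))"

lemma erw_scale_pos: "erw_scale n > 0"
  unfolding erw_scale_def by (intro prod_pos) (auto simp: add_pos_nonneg)

lemma erw_scale_Suc: "n \<ge> 1 \<Longrightarrow> erw_scale (Suc n) = erw_scale n * (1 + 1 / (2 * real n))"
  unfolding erw_scale_def by (simp add: prod.atLeastLessThan_Suc)

lemma erw_scale_sq_bounds: "n \<ge> 1 \<Longrightarrow> real n \<le> erw_scale n ^ 2 \<and> erw_scale n ^ 2 \<le> 2 * real n - 1"
proof (induction n rule: nat_induct_at_least)
  case base
  then show ?case by (simp add: erw_scale_def)
next
  case (Suc n)
  define r where "r = (1 + 1 / (2 * real n)) ^ 2"
  have n: "real n \<ge> 1" using Suc.hyps by simp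
  have r_eq: "r = (2 * real n + 1) ^ 2 / (4 * real n ^ 2)"
    using n unfolding r_def by (simp add: field_simps power2_eq_square)
  have lower: "real (Suc n) \<le> real n * r"
    using n unfolding r_eq by (simp add: field_simps power2_eq_square)
  have upper: "(2 * real n - 1) * r \<le> 2 * real (Suc n) - 1"
    using n unfolding r_eq by (simp add: field_simps power2_eq_square)
  have step: "erw_scale (Suc n) ^ 2 = erw_scale n ^ 2 * r"
    unfolding erw_scale_Suc[OF Suc.hyps] r_def by (simp add: power_mult_distrib)
  have "r \<ge> 0" unfolding r_def by simp
  then show ?case
    using Suc.IH lower upper mult_right_mono[of "real n" "erw_scale n ^ 2" r]
      mult_right_mono[of "erw_scale n ^ 2" "2 * real n - 1" r]
    unfolding step by linarith
qed

lemma erw_scale_le_sqrt: "n \<ge> 1 \<Longrightarrow> erw_scale n \<le> sqrt 2 * sqrt (real n)"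
  using erw_scale_sq_bounds[of n] by (simp add: real_le_rsqrt flip: real_sqrt_mult)

definition erw_mart :: "'d::finite \<Rightarrow> nat \<Rightarrow> (nat \<Rightarrow> 'd \<times> bool) \<Rightarrow> real" where
  "erw_mart i n x = walk_coord i n x / erw_scale n"

lemma erw_mart_cong: "(\<And>k. k \<in> {1..n} \<Longrightarrow> x k = x' k) \<Longrightarrow> erw_mart i n x = erw_mart i n x'"
  unfolding erw_mart_def by (subst walk_coord_cong[of n x x']) auto

lemma erw_mart_Suc:
  assumes k: "k \<ge> 1"
  shows "erw_mart i (Suc k) (x(Suc k := y))
           = erw_mart i k x + (dirvec y $ i - walk_coord i k x / (2 * real k)) / erw_scale (Suc k)"
proof -
  have coord: "walk_coord i (Suc k) (x(Suc k := y)) = walk_coord i k x + dirvec y $ i"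
    using walk_coord_cong[of k "x(Suc k := y)" x] unfolding walk_coord_Suc by simp
  define g where "g = erw_scale k"
  define r where "r = 1 + 1 / (2 * real k)"
  define S where "S = walk_coord i k x"
  have pos: "g > 0" "r > 0" using erw_scale_pos[of k] by (simp_all add: g_def r_def add_pos_nonneg)
  have "S + dirvec y $ i = S * r + (dirvec y $ i - S / (2 * real k))"
    unfolding r_def by (simp add: algebra_simps)
  then have "(S + dirvec y $ i) / (g * r) = (S * r) / (g * r) + (dirvec y $ i - S / (2 * real k)) / (g * r)"
    by (simp only: add_divide_distrib)
  also have "(S * r) / (g * r) = S / g"
    using pos by simp
  finally show ?thesis
    unfolding erw_mart_def coord erw_scale_Suc[OF k] g_def r_def S_def .
qed

lemma erw_mart_upd: "m \<le> k \<Longrightarrow> erw_mart i m (x(Suc k := y)) = erw_mart i m x"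
  by (rule erw_mart_cong) auto

section \<open>The transition kernel and the law of the first n steps\<close>

lemma sum_if_eq_weighted:
  "(\<Sum>y\<in>UNIV. (if (a::'b::finite) = y then p else q) * (v y :: real))
     = q * (\<Sum>y\<in>UNIV. v y) + (p - q) * v a"
proof -
  have "(\<Sum>y\<in>UNIV. (if a = y then p else q) * v y)
      = (\<Sum>y\<in>UNIV. q * v y + (if a = y then (p - q) * v y else 0))"
    by (intro sum.cong refl) (simp add: ring_distribs)
  also have "\<dots> = q * (\<Sum>y\<in>UNIV. v y) + (p - q) * v a"
    by (simp add: sum.distrib sum_distrib_left)
  finally show ?thesis .
qed

lemma erw_trans_weighted_sum:
  "(\<Sum>y\<in>UNIV. erw_trans p n (x :: nat \<Rightarrow> 'd::finite \<times> bool) y * v y)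
     = (1 / real n) * (\<Sum>k\<in>{1..n}. (1 - p) / (2 * real CARD('d) - 1) * (\<Sum>y\<in>UNIV. v y)
          + (p - (1 - p) / (2 * real CARD('d) - 1)) * v (x k))"
  unfolding erw_trans_def sum_if_eq_weighted[symmetric]
  by (simp add: sum_distrib_left sum_distrib_right sum.swap[of _ UNIV] mult_ac)

lemma real_card_ge_1: "real CARD('d::finite) \<ge> 1"
  by (simp add: Suc_le_eq)

lemma erw_trans_nonneg:
  assumes "0 \<le> p" "p \<le> 1"
  shows "erw_trans p n (x :: nat \<Rightarrow> 'd::finite \<times> bool) y \<ge> 0"
proof -
  have "2 * real CARD('d) - 1 > 0"
    using real_card_ge_1[where 'd='d] by linarith
  then show ?thesis
    unfolding erw_trans_def using assms by (intro mult_nonneg_nonneg sum_nonneg) auto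
qed

lemma sum_erw_trans:
  assumes "n \<ge> 1"
  shows "(\<Sum>y\<in>UNIV. erw_trans p n (x :: nat \<Rightarrow> 'd::finite \<times> bool) y) = 1"
proof -
  define q where "q = (1 - p) / (2 * real CARD('d) - 1)"
  have "2 * real CARD('d) - 1 \<noteq> 0"
    using real_card_ge_1[where 'd='d] by linarith
  then have "q * (2 * real CARD('d) - 1) = 1 - p"
    unfolding q_def by simp
  then have "q * (2 * real CARD('d)) + (p - q) = 1"
    by (simp add: algebra_simps)
  have "(\<Sum>y\<in>UNIV. erw_trans p n x y) = (1 / real n) * (\<Sum>k\<in>{1..n}. q * (2 * real CARD('d)) + (p - q))"
    using erw_trans_weighted_sum[of p n x "\<lambda>_. 1", folded q_def] by (simp add: card_UNIV_bool mult_ac)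
  also have "\<dots> = 1"
    using \<open>q * (2 * real CARD('d)) + (p - q) = 1\<close> assms by simp
  finally show ?thesis .
qed

lemma erw_trans_mean_coord:
  "(\<Sum>y\<in>UNIV. erw_trans p n (x :: nat \<Rightarrow> 'd::finite \<times> bool) y * dirvec y $ i)
     = (p - (1 - p) / (2 * real CARD('d) - 1)) * walk_coord i n x / real n"
  unfolding erw_trans_weighted_sum sum_dirvec_nth walk_coord_def
  by (simp add: sum_distrib_left sum_divide_distrib)

lemma critical_memory_drift:
  fixes c :: real
  assumes "c \<ge> 1"
  shows "(2 * c + 1) / (4 * c) - (1 - (2 * c + 1) / (4 * c)) / (2 * c - 1) = 1 / 2"
proof -
  have "1 - (2 * c + 1) / (4 * c) = (2 * c - 1) / (4 * c)"
    using assms by (simp add: field_simps)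
  moreover have "2 * c - 1 \<noteq> 0"
    using assms by simp
  ultimately show ?thesis
    using assms by (simp add: field_simps)
qed

lemma critical_memory_bounds:
  "0 \<le> (2 * real CARD('d::finite) + 1) / (4 * real CARD('d))"
  "(2 * real CARD('d::finite) + 1) / (4 * real CARD('d)) \<le> 1"
proof -
  have "real CARD('d) \<ge> 1"
    by (rule real_card_ge_1)
  then have "2 * real CARD('d) + 1 \<le> 4 * real CARD('d)" "4 * real CARD('d) > 0"
    by linarith+
  then show "0 \<le> (2 * real CARD('d) + 1) / (4 * real CARD('d))"
    and "(2 * real CARD('d) + 1) / (4 * real CARD('d)) \<le> 1"
    by (simp_all add: divide_le_eq)
qed

definition paths :: "nat \<Rightarrow> (nat \<Rightarrow> 'd::finite \<times> bool) set" where
  "paths n = PiE {1..n} (\<lambda>_. UNIV)"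

lemma finite_paths: "finite (paths n)"
  unfolding paths_def by (intro finite_PiE) auto

lemma sum_paths_Suc:
  "(\<Sum>x\<in>paths (Suc n). f x) = (\<Sum>x\<in>paths n. \<Sum>y\<in>UNIV. f (x(Suc n := y)))"
proof -
  have ivl: "{1..Suc n} = insert (Suc n) {1..n}"
    by auto
  have "(\<Sum>x\<in>paths (Suc n). f x) = (\<Sum>x\<in>(\<lambda>(y, g). g(Suc n := y)) ` (UNIV \<times> paths n). f x)"
    unfolding paths_def ivl PiE_insert_eq by simp
  also have "\<dots> = (\<Sum>(y, g)\<in>UNIV \<times> paths n. f (g(Suc n := y)))"
    by (subst sum.reindex)
      (auto simp: paths_def case_prod_unfold
        intro!: inj_combinator[of "Suc n" "{1..n}" "\<lambda>_. UNIV", simplified])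
  also have "\<dots> = (\<Sum>y\<in>UNIV. \<Sum>x\<in>paths n. f (x(Suc n := y)))"
    by (simp add: sum.cartesian_product)
  also have "\<dots> = (\<Sum>x\<in>paths n. \<Sum>y\<in>UNIV. f (x(Suc n := y)))"
    by (rule sum.swap)
  finally show ?thesis .
qed

lemma erw_prob_Suc:
  assumes "n \<ge> 1"
  shows "erw_prob p (Suc n) ((x :: nat \<Rightarrow> 'd::finite \<times> bool)(Suc n := y)) = erw_prob p n x * erw_trans p n x y"
proof -
  have trans_upd: "erw_trans p m (x(Suc n := y)) = erw_trans p m x" if "m \<le> n" for m
    unfolding erw_trans_def using that by (intro ext arg_cong2[where f="(*)"] sum.cong) auto
  show ?thesis
    unfolding erw_prob_def using assms by (simp add: prod.atLeastLessThan_Suc trans_upd)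
qed

lemma sets_erw_cylinder:
  assumes "is_erw M p X"
  shows "{\<omega>\<in>space M. \<forall>k\<in>{1..n}. X k \<omega> = x k} \<in> sets M"
proof -
  have "X k \<in> measurable M (count_space UNIV)" for k
    using assms unfolding is_erw_def by auto
  then have "{\<omega>\<in>space M. X k \<omega> = x k} \<in> sets M" for k
    by measurable
  then show ?thesis
    by (intro sets.sets_Collect_finite_All) auto
qed

lemma erw_prob_nonneg:
  fixes X :: "nat \<Rightarrow> 'a \<Rightarrow> 'd::finite \<times> bool" and x :: "nat \<Rightarrow> 'd \<times> bool"
  assumes "is_erw M p X" "n \<ge> 1"
  shows "erw_prob p n x \<ge> 0"
proof -
  have "measure M {\<omega>\<in>space M. \<forall>k\<in>{1..n}. X k \<omega> = x k} = erw_prob p n x"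
    using assms unfolding is_erw_def by blast
  then show ?thesis
    using measure_nonneg[of M "{\<omega>\<in>space M. \<forall>k\<in>{1..n}. X k \<omega> = x k}"] by simp
qed

lemma event_eq_UN_cylinders:
  fixes X :: "nat \<Rightarrow> 'a \<Rightarrow> 'd::finite \<times> bool"
  assumes Q: "\<And>x x'. (\<And>k. k \<in> {1..n} \<Longrightarrow> x k = x' k) \<Longrightarrow> Q x = Q x'"
  shows "{\<omega>\<in>space M. Q (\<lambda>k. X k \<omega>)}
           = (\<Union>x\<in>{x\<in>paths n. Q x}. {\<omega>\<in>space M. \<forall>k\<in>{1..n}. X k \<omega> = x k})"
proof (intro equalityI subsetI)
  fix \<omega> assume \<omega>: "\<omega> \<in> {\<omega>\<in>space M. Q (\<lambda>k. X k \<omega>)}"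
  define x where "x = restrict (\<lambda>k. X k \<omega>) {1..n}"
  have "x \<in> {x\<in>paths n. Q x}" "\<omega> \<in> {\<omega>\<in>space M. \<forall>k\<in>{1..n}. X k \<omega> = x k}"
    using \<omega> Q[of x "\<lambda>k. X k \<omega>"] unfolding x_def paths_def by auto
  then show "\<omega> \<in> (\<Union>x\<in>{x\<in>paths n. Q x}. {\<omega>\<in>space M. \<forall>k\<in>{1..n}. X k \<omega> = x k})"
    by blast
next
  fix \<omega> assume "\<omega> \<in> (\<Union>x\<in>{x\<in>paths n. Q x}. {\<omega>\<in>space M. \<forall>k\<in>{1..n}. X k \<omega> = x k})"
  then obtain x where "Q x" "\<omega> \<in> space M" "\<forall>k\<in>{1..n}. X k \<omega> = x k"
    by auto
  then show "\<omega> \<in> {\<omega>\<in>space M. Q (\<lambda>k. X k \<omega>)}"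
    using Q[of x "\<lambda>k. X k \<omega>"] by auto
qed

lemma disjoint_family_on_cylinders:
  fixes X :: "nat \<Rightarrow> 'a \<Rightarrow> 'd::finite \<times> bool"
  shows "disjoint_family_on (\<lambda>x. {\<omega>\<in>space M. \<forall>k\<in>{1..n}. X k \<omega> = x k}) (paths n)"
  unfolding disjoint_family_on_def
proof (intro ballI impI)
  fix x x' :: "nat \<Rightarrow> 'd \<times> bool"
  assume "x \<in> paths n" "x' \<in> paths n" "x \<noteq> x'"
  then obtain k where "k \<in> {1..n}" "x k \<noteq> x' k"
    unfolding paths_def by (metis PiE_ext)
  then show "{\<omega>\<in>space M. \<forall>k\<in>{1..n}. X k \<omega> = x k} \<inter> {\<omega>\<in>space M. \<forall>k\<in>{1..n}. X k \<omega> = x' k} = {}"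
    by auto
qed

lemma erw_path_event:
  assumes E: "is_erw M p X" and n: "n \<ge> 1"
    and Q: "\<And>x x'. (\<And>k. k \<in> {1..n} \<Longrightarrow> x k = x' k) \<Longrightarrow> Q x = Q x'"
  shows "{\<omega>\<in>space M. Q (\<lambda>k. X k \<omega>)} \<in> sets M"
    and "measure M {\<omega>\<in>space M. Q (\<lambda>k. X k \<omega>)} = (\<Sum>x\<in>{x\<in>paths n. Q x}. erw_prob p n x)"
proof -
  interpret prob_space M
    using E unfolding is_erw_def by auto
  define C where "C x = {\<omega>\<in>space M. \<forall>k\<in>{1..n}. X k \<omega> = x k}" for x
  have C_sets: "C x \<in> sets M" for x
    unfolding C_def by (rule sets_erw_cylinder[OF E])
  have event_eq: "{\<omega>\<in>space M. Q (\<lambda>k. X k \<omega>)} = (\<Union>x\<in>{x\<in>paths n. Q x}. C x)"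
    unfolding C_def using Q by (rule event_eq_UN_cylinders)
  have fin: "finite {x\<in>paths n. Q x}"
    using finite_paths by (rule finite_subset[rotated]) auto
  show "{\<omega>\<in>space M. Q (\<lambda>k. X k \<omega>)} \<in> sets M"
    unfolding event_eq using fin C_sets by auto
  have disj: "disjoint_family_on C {x\<in>paths n. Q x}"
    unfolding C_def by (rule disjoint_family_on_mono[OF _ disjoint_family_on_cylinders]) auto
  have "measure M {\<omega>\<in>space M. Q (\<lambda>k. X k \<omega>)} = (\<Sum>x\<in>{x\<in>paths n. Q x}. measure M (C x))"
    unfolding event_eq using C_sets by (intro measure_finite_Union[OF fin _ disj]) auto
  also have "\<dots> = (\<Sum>x\<in>{x\<in>paths n. Q x}. erw_prob p n x)"
  proof (rule sum.cong[OF refl])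
    fix x
    show "measure M (C x) = erw_prob p n x"
      using E n unfolding is_erw_def C_def by blast
  qed
  finally show "measure M {\<omega>\<in>space M. Q (\<lambda>k. X k \<omega>)} = (\<Sum>x\<in>{x\<in>paths n. Q x}. erw_prob p n x)" .
qed

lemma sum_erw_prob_paths:
  assumes "is_erw M p (X :: nat \<Rightarrow> 'a \<Rightarrow> 'd::finite \<times> bool)" "n \<ge> 1"
  shows "(\<Sum>x\<in>(paths n :: (nat \<Rightarrow> 'd \<times> bool) set). erw_prob p n x) = 1"
proof -
  interpret prob_space M
    using assms unfolding is_erw_def by auto
  have "measure M {\<omega>\<in>space M. True} = (\<Sum>x\<in>{x\<in>(paths n :: (nat \<Rightarrow> 'd \<times> bool) set). True}. erw_prob p n x)"
    using erw_path_event(2)[OF assms, where Q="\<lambda>_. True"] by simp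
  then show ?thesis
    using prob_space by simp
qed

section \<open>Azuma-Hoeffding bounds for the martingale\<close>

lemma erw_mart_increment_mgf_le:
  fixes x :: "nat \<Rightarrow> 'd::finite \<times> bool"
  assumes p: "p = (2 * real CARD('d) + 1) / (4 * real CARD('d))" and k: "k \<ge> 1"
  shows "(\<Sum>y\<in>UNIV. erw_trans p k x y
            * exp (l * ((dirvec y $ i - walk_coord i k x / (2 * real k)) / erw_scale (Suc k))))
         \<le> exp (l\<^sup>2 * (3 / (2 * erw_scale (Suc k)))\<^sup>2 / 2)"
proof (rule hoeffding_lemma_finite_sum)
  define g where "g = erw_scale (Suc k)"
  have "g > 0"
    unfolding g_def by (rule erw_scale_pos)
  show "erw_trans p k x y \<ge> 0" for y
    using critical_memory_bounds[where 'd='d] unfolding p by (rule erw_trans_nonneg)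
  show sum_one: "(\<Sum>y\<in>UNIV. erw_trans p k x y) = 1"
    using k by (rule sum_erw_trans)
  have drift: "(\<Sum>y\<in>UNIV. erw_trans p k x y * dirvec y $ i) = walk_coord i k x / (2 * real k)"
    unfolding erw_trans_mean_coord p critical_memory_drift[OF real_card_ge_1] by simp
  have "(\<Sum>y\<in>UNIV. erw_trans p k x y * ((dirvec y $ i - walk_coord i k x / (2 * real k)) / g))
      = ((\<Sum>y\<in>UNIV. erw_trans p k x y * dirvec y $ i)
          - walk_coord i k x / (2 * real k) * (\<Sum>y\<in>UNIV. erw_trans p k x y)) / g"
    by (simp add: sum_divide_distrib sum_subtractf sum_distrib_left right_diff_distrib
        diff_divide_distrib mult_ac)
  then show "(\<Sum>y\<in>UNIV. erw_trans p k x y * ((dirvec y $ i - walk_coord i k x / (2 * real k)) / g)) = 0"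
    unfolding drift sum_one by simp
  show "\<bar>(dirvec y $ i - walk_coord i k x / (2 * real k)) / g\<bar> \<le> 3 / (2 * g)" for y
  proof -
    have "\<bar>walk_coord i k x / (2 * real k)\<bar> \<le> 1 / 2"
      using abs_walk_coord_le[of i k x] k by (simp add: abs_div field_simps)
    then have "\<bar>dirvec y $ i - walk_coord i k x / (2 * real k)\<bar> \<le> 3 / 2"
      using abs_dirvec_nth_le[of y i] by linarith
    then have "\<bar>dirvec y $ i - walk_coord i k x / (2 * real k)\<bar> / g \<le> (3 / 2) / g"
      using \<open>g > 0\<close> by (intro divide_right_mono) auto
    then show ?thesis
      using \<open>g > 0\<close> by (simp add: abs_div)
  qed
  show "3 / (2 * g) > 0"
    using \<open>g > 0\<close> by simp
qed simp

text \<open>\<open>3 / (2 * erw_scale (Suc k))\<close> bounds the increment of \<open>erw_mart\<close> at step \<open>k + 1\<close>.\<close>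

definition erw_var_bound :: "nat \<Rightarrow> nat \<Rightarrow> real" where
  "erw_var_bound m n = (\<Sum>k\<in>{m..<n}. (3 / (2 * erw_scale (Suc k)))\<^sup>2)"

lemma erw_mart_mgf_le:
  fixes X :: "nat \<Rightarrow> 'a \<Rightarrow> 'd::finite \<times> bool"
  assumes E: "is_erw M p X" and p: "p = (2 * real CARD('d) + 1) / (4 * real CARD('d))"
    and m: "1 \<le> m" "m \<le> n"
  shows "(\<Sum>x\<in>(paths n :: (nat \<Rightarrow> 'd \<times> bool) set). erw_prob p n x * exp (l * (erw_mart i n x - erw_mart i m x)))
         \<le> exp (l\<^sup>2 / 2 * erw_var_bound m n)"
  using m(2)
proof (induction n rule: dec_induct)
  case base
  show ?case
    using sum_erw_prob_paths[OF E m(1)] by (simp add: erw_var_bound_def)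
next
  case (step k)
  have k: "k \<ge> 1"
    using step.hyps m(1) by simp
  define Z where "Z x = erw_mart i k x - erw_mart i m x" for x :: "nat \<Rightarrow> 'd \<times> bool"
  define D where "D x y = (dirvec y $ i - walk_coord i k x / (2 * real k)) / erw_scale (Suc k)"
    for x :: "nat \<Rightarrow> 'd \<times> bool" and y
  define c where "c = 3 / (2 * erw_scale (Suc k))"
  have split: "erw_prob p (Suc k) (x(Suc k := y)) * exp (l * (erw_mart i (Suc k) (x(Suc k := y)) - erw_mart i m (x(Suc k := y))))
      = (erw_prob p k x * exp (l * Z x)) * (erw_trans p k x y * exp (l * D x y))" for x y
  proof -
    have "erw_mart i (Suc k) (x(Suc k := y)) - erw_mart i m (x(Suc k := y)) = Z x + D x y"
      unfolding erw_mart_Suc[OF k] erw_mart_upd[OF step.hyps(1)] Z_def D_def by simp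
    then show ?thesis
      unfolding erw_prob_Suc[OF k] by (simp add: distrib_left exp_add mult_ac)
  qed
  have "(\<Sum>x\<in>(paths (Suc k) :: (nat \<Rightarrow> 'd \<times> bool) set). erw_prob p (Suc k) x * exp (l * (erw_mart i (Suc k) x - erw_mart i m x)))
      = (\<Sum>x\<in>(paths k :: (nat \<Rightarrow> 'd \<times> bool) set). (erw_prob p k x * exp (l * Z x)) * (\<Sum>y\<in>UNIV. erw_trans p k x y * exp (l * D x y)))"
    unfolding sum_paths_Suc split by (simp add: sum_distrib_left)
  also have "\<dots> \<le> (\<Sum>x\<in>(paths k :: (nat \<Rightarrow> 'd \<times> bool) set). (erw_prob p k x * exp (l * Z x)) * exp (l\<^sup>2 * c\<^sup>2 / 2))"
    unfolding D_def c_def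
    by (intro sum_mono mult_left_mono erw_mart_increment_mgf_le[OF p k] mult_nonneg_nonneg
        erw_prob_nonneg[OF E k]) auto
  also have "\<dots> \<le> exp (l\<^sup>2 / 2 * erw_var_bound m k) * exp (l\<^sup>2 * c\<^sup>2 / 2)"
    using step.IH unfolding Z_def sum_distrib_right[symmetric] by (intro mult_right_mono) auto
  also have "\<dots> = exp (l\<^sup>2 / 2 * erw_var_bound m (Suc k))"
    using step.hyps(1) unfolding erw_var_bound_def c_def
    by (simp add: algebra_simps flip: exp_add)
  finally show ?case .
qed

lemma erw_mart_tail_bound:
  fixes X :: "nat \<Rightarrow> 'a \<Rightarrow> 'd::finite \<times> bool" and i :: 'd
  assumes E: "is_erw M p X" and p: "p = (2 * real CARD('d) + 1) / (4 * real CARD('d))"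
    and m: "1 \<le> m" "m \<le> n" and V: "erw_var_bound m n \<le> V" "V > 0" and "t \<ge> 0"
  defines "A \<equiv> {\<omega>\<in>space M. t \<le> \<bar>erw_mart i n (\<lambda>k. X k \<omega>) - erw_mart i m (\<lambda>k. X k \<omega>)\<bar>}"
  shows "A \<in> sets M" and "measure M A \<le> 2 * exp (- (t\<^sup>2) / (2 * V))"
proof -
  have n: "n \<ge> 1"
    using m by simp
  define Q where "Q x = (t \<le> \<bar>erw_mart i n x - erw_mart i m x\<bar>)" for x :: "nat \<Rightarrow> 'd \<times> bool"
  have Q: "Q x = Q x'" if "\<And>k. k \<in> {1..n} \<Longrightarrow> x k = x' k" for x x'
    unfolding Q_def using that m erw_mart_cong[of n x x' i] erw_mart_cong[of m x x' i] by simp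
  show "A \<in> sets M"
    unfolding A_def using erw_path_event(1)[OF E n, of Q] Q unfolding Q_def by blast
  have "measure M A = (\<Sum>x\<in>{x\<in>paths n. Q x}. erw_prob p n x)"
    unfolding A_def using erw_path_event(2)[OF E n, of Q] Q unfolding Q_def by blast
  also have "\<dots> \<le> 2 * exp (- (t\<^sup>2) / (2 * V))"
    unfolding Q_def
  proof (rule chernoff_two_sided_finite_sum[OF finite_paths erw_prob_nonneg[OF E n] _ V(2) \<open>t \<ge> 0\<close>])
    fix l
    have "l\<^sup>2 / 2 * erw_var_bound m n \<le> l\<^sup>2 / 2 * V"
      using V(1) by (intro mult_left_mono) auto
    then show "(\<Sum>x\<in>paths n. erw_prob p n x * exp (l * (erw_mart i n x - erw_mart i m x))) \<le> exp (l\<^sup>2 / 2 * V)"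
      using erw_mart_mgf_le[OF E p m, of l i] by (meson exp_le_cancel_iff order.trans)
  qed
  finally show "measure M A \<le> 2 * exp (- (t\<^sup>2) / (2 * V))" .
qed

section \<open>Dyadic blocks and Borel-Cantelli\<close>

lemma erw_var_bound_term_le: "(3 / (2 * erw_scale (Suc k)))\<^sup>2 \<le> 9 / 4 / (real k + 1)"
proof -
  have "real k + 1 \<le> erw_scale (Suc k) ^ 2"
    using erw_scale_sq_bounds[of "Suc k"] by simp
  then have "1 / erw_scale (Suc k) ^ 2 \<le> 1 / (real k + 1)"
    using erw_scale_pos[of "Suc k"] by (intro divide_left_mono) auto
  then have "9 / 4 * (1 / erw_scale (Suc k) ^ 2) \<le> 9 / 4 * (1 / (real k + 1))"
    by (rule mult_left_mono) simp
  then show ?thesis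
    by (simp add: power_divide power_mult_distrib)
qed

lemma erw_var_bound_dyadic_block:
  assumes "n \<le> 2 ^ (j + 1)"
  shows "erw_var_bound (2 ^ j) n \<le> 9 / 4"
proof -
  have "erw_var_bound (2 ^ j) n \<le> (\<Sum>k\<in>{2 ^ j..<2 ^ (j + 1)}. (3 / (2 * erw_scale (Suc k)))\<^sup>2)"
    unfolding erw_var_bound_def using assms by (intro sum_mono2) auto
  also have "\<dots> \<le> (\<Sum>k\<in>{(2::nat) ^ j..<2 ^ (j + 1)}. 9 / 4 / 2 ^ j)"
  proof (intro sum_mono order.trans[OF erw_var_bound_term_le])
    fix k assume "k \<in> {(2::nat) ^ j..<2 ^ (j + 1)}"
    then have "(2::real) ^ j \<le> real k"
      by (metis atLeastLessThan_iff of_nat_le_iff of_nat_numeral of_nat_power)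
    then have "(2::real) ^ j \<le> real k + 1"
      by linarith
    then show "9 / 4 / (real k + 1) \<le> 9 / 4 / 2 ^ j"
      by (intro divide_left_mono) auto
  qed
  also have "\<dots> = 9 / 4"
    by simp
  finally show ?thesis .
qed

lemma erw_var_bound_dyadic_prefix: "erw_var_bound 1 (2 ^ j) \<le> 9 / 4 * real j"
proof (induction j)
  case 0
  then show ?case
    by (simp add: erw_var_bound_def)
next
  case (Suc j)
  have "erw_var_bound 1 (2 ^ Suc j) = erw_var_bound 1 (2 ^ j) + erw_var_bound (2 ^ j) (2 ^ (j + 1))"
    unfolding erw_var_bound_def by (simp add: sum.atLeastLessThan_concat)
  then show ?case
    using Suc.IH erw_var_bound_dyadic_block[of "2 ^ (j + 1)" j] by (simp add: algebra_simps)
qed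

definition dyadic_small :: "(nat \<Rightarrow> real) \<Rightarrow> real \<Rightarrow> nat \<Rightarrow> bool" where
  "dyadic_small f \<epsilon> j \<longleftrightarrow>
     \<bar>f (2 ^ j) - f 1\<bar> < \<epsilon> * real j \<and> (\<forall>k\<in>{2 ^ j..2 ^ (j + 1)}. \<bar>f k - f (2 ^ j)\<bar> < \<epsilon> * real j)"

lemma dyadic_small_mono: "dyadic_small f \<epsilon> j \<Longrightarrow> \<epsilon> \<le> \<epsilon>' \<Longrightarrow> dyadic_small f \<epsilon>' j"
  unfolding dyadic_small_def using mult_right_mono[of \<epsilon> \<epsilon>' "real j"] by force

lemma erw_mart_dyadic_prefix_tail_bound:
  fixes X :: "nat \<Rightarrow> 'a \<Rightarrow> 'd::finite \<times> bool" and i :: 'd and t :: real and j :: nat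
  assumes E: "is_erw M p X" and p: "p = (2 * real CARD('d) + 1) / (4 * real CARD('d))" and "t \<ge> 0"
  defines "A \<equiv> {\<omega>\<in>space M. t \<le> \<bar>erw_mart i (2 ^ j) (\<lambda>k. X k \<omega>) - erw_mart i 1 (\<lambda>k. X k \<omega>)\<bar>}"
  shows "A \<in> sets M" and "measure M A \<le> 2 * exp (- (t\<^sup>2) / (9 / 2 * (real j + 1)))"
proof -
  have V: "2 * (9 / 4 * (real j + 1)) = 9 / 2 * (real j + 1)"
    by linarith
  show "A \<in> sets M" "measure M A \<le> 2 * exp (- (t\<^sup>2) / (9 / 2 * (real j + 1)))"
    using erw_mart_tail_bound[OF E p _ _ _ _ \<open>t \<ge> 0\<close>, of 1 "2 ^ j" "9 / 4 * (real j + 1)" i, unfolded V]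
      erw_var_bound_dyadic_prefix[of j]
    unfolding A_def by simp_all
qed

lemma erw_mart_dyadic_block_tail_bound:
  fixes X :: "nat \<Rightarrow> 'a \<Rightarrow> 'd::finite \<times> bool" and i :: 'd and t :: real and j k :: nat
  assumes E: "is_erw M p X" and p: "p = (2 * real CARD('d) + 1) / (4 * real CARD('d))" and "t \<ge> 0"
    and k: "k \<in> {2 ^ j..2 ^ (j + 1)}"
  defines "A \<equiv> {\<omega>\<in>space M. t \<le> \<bar>erw_mart i k (\<lambda>k. X k \<omega>) - erw_mart i (2 ^ j) (\<lambda>k. X k \<omega>)\<bar>}"
  shows "A \<in> sets M" and "measure M A \<le> 2 * exp (- (t\<^sup>2) / (9 / 2))"
  using erw_mart_tail_bound[OF E p _ _ _ _ \<open>t \<ge> 0\<close>, of "2 ^ j" k "9 / 4" i]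
    erw_var_bound_dyadic_block[of k j] k
  unfolding A_def by simp_all

lemma prob_not_dyadic_small_le:
  fixes X :: "nat \<Rightarrow> 'a \<Rightarrow> 'd::finite \<times> bool" and \<epsilon> :: real and j :: nat
  assumes E: "is_erw M p X" and p: "p = (2 * real CARD('d) + 1) / (4 * real CARD('d))"
    and "\<epsilon> \<ge> 0"
  defines "B \<equiv> {\<omega>\<in>space M. \<exists>i. \<not> dyadic_small (\<lambda>k. erw_mart i k (\<lambda>k. X k \<omega>)) \<epsilon> j}"
  shows "B \<in> sets M"
    and "measure M B \<le> 2 * real CARD('d) * (exp (- (\<epsilon> * real j)\<^sup>2 / (9 / 2 * (real j + 1)))
                                          + 2 ^ (j + 1) * exp (- (\<epsilon> * real j)\<^sup>2 / (9 / 2)))"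
proof -
  interpret prob_space M
    using E unfolding is_erw_def by auto
  define t where "t = \<epsilon> * real j"
  have "t \<ge> 0"
    unfolding t_def using \<open>\<epsilon> \<ge> 0\<close> by simp
  define D where "D i m n = {\<omega>\<in>space M. t \<le> \<bar>erw_mart i n (\<lambda>k. X k \<omega>) - erw_mart i m (\<lambda>k. X k \<omega>)\<bar>}"
    for i :: 'd and m n
  define block where "block = {(2::nat) ^ j..2 ^ (j + 1)}"
  note prefix = erw_mart_dyadic_prefix_tail_bound[OF E p \<open>t \<ge> 0\<close>, where j = j, folded D_def]
  note in_block = erw_mart_dyadic_block_tail_bound[OF E p \<open>t \<ge> 0\<close>, where j = j, folded D_def block_def]
  have B_eq: "B = (\<Union>i. D i 1 (2 ^ j)) \<union> (\<Union>i. \<Union>k\<in>block. D i (2 ^ j) k)"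
    unfolding B_def D_def dyadic_small_def block_def t_def by (auto simp: not_less)
  show "B \<in> sets M"
    unfolding B_eq using prefix in_block by (intro sets.Un sets.finite_UN) (auto simp: block_def)
  have card_block: "real (card block) \<le> 2 ^ (j + 1)"
    unfolding block_def by (simp add: of_nat_diff)
  have "measure M B \<le> (\<Sum>i\<in>UNIV. measure M (D i 1 (2 ^ j))) + (\<Sum>i\<in>UNIV. \<Sum>k\<in>block. measure M (D i (2 ^ j) k))"
    unfolding B_eq using prefix in_block
    by (intro order.trans[OF measure_Un_le] add_mono order.trans[OF measure_UNION_le] sum_mono
        measure_UNION_le sets.finite_UN) (auto simp: block_def)
  also have "\<dots> \<le> (\<Sum>i\<in>(UNIV :: 'd set). 2 * exp (- (t\<^sup>2) / (9 / 2 * (real j + 1))))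
      + (\<Sum>i\<in>(UNIV :: 'd set). \<Sum>k\<in>block. 2 * exp (- (t\<^sup>2) / (9 / 2)))"
    using prefix in_block by (intro add_mono sum_mono) auto
  also have "\<dots> \<le> 2 * real CARD('d) * (exp (- (t\<^sup>2) / (9 / 2 * (real j + 1)))
                                          + 2 ^ (j + 1) * exp (- (t\<^sup>2) / (9 / 2)))"
    using card_block by (simp add: algebra_simps mult_right_mono)
  finally show "measure M B \<le> 2 * real CARD('d) * (exp (- (\<epsilon> * real j)\<^sup>2 / (9 / 2 * (real j + 1)))
                                          + 2 ^ (j + 1) * exp (- (\<epsilon> * real j)\<^sup>2 / (9 / 2)))"
    unfolding t_def .
qed

lemma summable_dyadic_tail_bound:
  fixes \<epsilon> :: real
  assumes "\<epsilon> > 0"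
  shows "summable (\<lambda>j::nat. exp (- (\<epsilon> * real j)\<^sup>2 / (9 / 2 * (real j + 1)))
                           + 2 ^ (j + 1) * exp (- (\<epsilon> * real j)\<^sup>2 / (9 / 2)))"
proof (rule summable_comparison_test_bigo)
  show "summable (\<lambda>j::nat. norm (inverse (real j ^ 2)))"
    using inverse_power_summable[of 2] by simp
  show "(\<lambda>j::nat. exp (- (\<epsilon> * real j)\<^sup>2 / (9 / 2 * (real j + 1)))
                + 2 ^ (j + 1) * exp (- (\<epsilon> * real j)\<^sup>2 / (9 / 2))) \<in> O(\<lambda>j. inverse (real j ^ 2))"
    using assms by real_asymp
qed

lemma AE_eventually_dyadic_small:
  fixes X :: "nat \<Rightarrow> 'a \<Rightarrow> 'd::finite \<times> bool"
  assumes E: "is_erw M p X" and p: "p = (2 * real CARD('d) + 1) / (4 * real CARD('d))"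
  shows "AE \<omega> in M. \<forall>\<epsilon>>0. eventually (\<lambda>j. \<forall>i. dyadic_small (\<lambda>k. erw_mart i k (\<lambda>k. X k \<omega>)) \<epsilon> j) sequentially"
proof -
  interpret prob_space M
    using E unfolding is_erw_def by auto
  define B where "B \<epsilon> j = {\<omega>\<in>space M. \<exists>i. \<not> dyadic_small (\<lambda>k. erw_mart i k (\<lambda>k. X k \<omega>)) \<epsilon> j}"
    for \<epsilon> j
  have "AE \<omega> in M. eventually (\<lambda>j. \<omega> \<in> space M - B \<epsilon> j) sequentially" if "\<epsilon> > 0" for \<epsilon>
  proof (rule borel_cantelli_AE1)
    show B_sets: "B \<epsilon> j \<in> sets M" for j
      unfolding B_def using that by (intro prob_not_dyadic_small_le(1)[OF E p]) simp
    then show "emeasure M (B \<epsilon> j) < \<infinity>" for j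
      by (simp add: less_top[symmetric])
    show "summable (\<lambda>j. measure M (B \<epsilon> j))"
      using that prob_not_dyadic_small_le(2)[OF E p, of \<epsilon>] unfolding B_def
      by (intro summable_comparison_test'[OF summable_mult[OF summable_dyadic_tail_bound]]) auto
  qed
  then have "AE \<omega> in M. \<forall>r::nat. eventually (\<lambda>j. \<omega> \<in> space M - B (1 / Suc r) j) sequentially"
    by (simp add: AE_all_countable)
  then show ?thesis
  proof (rule AE_mp, intro AE_I2 impI allI)
    fix \<omega> and \<epsilon> :: real
    assume \<omega>: "\<omega> \<in> space M" and ev: "\<forall>r::nat. eventually (\<lambda>j. \<omega> \<in> space M - B (1 / Suc r) j) sequentially"
      and "\<epsilon> > 0"
    then obtain r where "inverse (real (Suc r)) < \<epsilon>"
      using reals_Archimedean by blast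
    then show "eventually (\<lambda>j. \<forall>i. dyadic_small (\<lambda>k. erw_mart i k (\<lambda>k. X k \<omega>)) \<epsilon> j) sequentially"
      using ev[rule_format, of r] \<omega> unfolding B_def
      by (elim eventually_mono) (auto intro: dyadic_small_mono simp: inverse_eq_divide)
  qed
qed

section \<open>Growth of the walk and of its barycentre\<close>

lemma real_le_ln_of_pow2_le:
  assumes "2 ^ j \<le> k"
  shows "real j \<le> 3 / 2 * ln (real k)"
proof -
  have "(2::real) ^ j \<le> real k"
    using assms by (metis of_nat_le_iff of_nat_numeral of_nat_power)
  then have "real j * ln 2 \<le> ln (real k)"
    by (metis ln_mono ln_realpow zero_less_numeral zero_less_power)
  moreover have "real j * (2 / 3) \<le> real j * ln 2"
    using ln2_ge_two_thirds by (intro mult_left_mono) auto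
  ultimately show ?thesis
    by linarith
qed

lemma ex_dyadic_block_ge:
  fixes J k :: nat
  assumes "2 ^ J \<le> k"
  shows "\<exists>j\<ge>J. 2 ^ j \<le> k \<and> k < 2 ^ (j + 1)"
proof -
  have "(1::nat) \<le> 2 ^ J"
    by simp
  then have "k \<ge> 1"
    using assms by linarith
  then obtain j where j: "2 ^ j \<le> k" "k < 2 ^ (j + 1)"
    using ex_power_ivl1[of 2 k] by auto
  have "J \<le> j"
  proof (rule ccontr)
    assume "\<not> J \<le> j"
    then have "(2::nat) ^ (j + 1) \<le> 2 ^ J"
      by (intro power_increasing) auto
    then show False
      using j assms by simp
  qed
  then show ?thesis
    using j by blast
qed

lemma abs_le_of_dyadic_small:
  assumes "dyadic_small f \<epsilon> j" "2 ^ j \<le> k" "k \<le> 2 ^ (j + 1)" "\<epsilon> \<ge> 0"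
  shows "\<bar>f k\<bar> \<le> \<bar>f 1\<bar> + 3 * \<epsilon> * ln (real k)"
proof -
  have "\<bar>f (2 ^ j) - f 1\<bar> < \<epsilon> * real j" "\<bar>f k - f (2 ^ j)\<bar> < \<epsilon> * real j"
    using assms unfolding dyadic_small_def by auto
  moreover have "\<epsilon> * real j \<le> \<epsilon> * (3 / 2 * ln (real k))"
    using real_le_ln_of_pow2_le[OF assms(2)] assms(4) by (rule mult_left_mono)
  ultimately show ?thesis
    by linarith
qed

lemma dyadic_small_imp_o_ln:
  fixes f :: "nat \<Rightarrow> real"
  assumes small: "\<And>\<epsilon>. \<epsilon> > 0 \<Longrightarrow> eventually (\<lambda>j. dyadic_small f \<epsilon> j) sequentially"
  shows "(\<lambda>k. f k / ln (real k)) \<longlonglongrightarrow> 0"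
  unfolding tendsto_iff
proof (intro allI impI)
  fix e :: real
  assume "e > 0"
  then obtain J where J: "\<And>j. j \<ge> J \<Longrightarrow> dyadic_small f (e / 6) j"
    using small[of "e / 6"] unfolding eventually_sequentially by auto
  have "(\<lambda>k. \<bar>f 1\<bar> / ln (real k)) \<longlonglongrightarrow> 0"
    by real_asymp
  then have "eventually (\<lambda>k. \<bar>f 1\<bar> / ln (real k) < e / 2) sequentially"
    using \<open>e > 0\<close> by (intro order_tendstoD) auto
  moreover have "eventually (\<lambda>k. max (2 ^ J) 2 \<le> k) sequentially"
    by (rule eventually_ge_at_top)
  ultimately show "eventually (\<lambda>k. dist (f k / ln (real k)) 0 < e) sequentially"
  proof eventually_elim
    case (elim k)
    then have "ln (real k) > 0"
      by simp
    obtain j where "j \<ge> J" "2 ^ j \<le> k" "k < 2 ^ (j + 1)"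
      using ex_dyadic_block_ge[of J k] elim by auto
    then have "\<bar>f k\<bar> \<le> \<bar>f 1\<bar> + e / 2 * ln (real k)"
      using abs_le_of_dyadic_small[OF J, of j k] \<open>e > 0\<close> by simp
    then have "\<bar>f k\<bar> / ln (real k) \<le> \<bar>f 1\<bar> / ln (real k) + e / 2"
      using \<open>ln (real k) > 0\<close> by (simp add: field_simps)
    then have "\<bar>f k\<bar> / ln (real k) < e"
      using elim(1) by linarith
    then show ?case
      using \<open>ln (real k) > 0\<close> by (simp add: abs_div)
  qed
qed

lemma walk_coord_o_sqrt_ln:
  assumes "(\<lambda>k. erw_mart i k x / ln (real k)) \<longlonglongrightarrow> 0"
  shows "(\<lambda>k. walk_coord i k x / (sqrt (real k) * ln (real k))) \<longlonglongrightarrow> 0"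
proof (rule tendsto_0_le[OF assms, of _ "sqrt 2"])
  show "eventually (\<lambda>k. norm (walk_coord i k x / (sqrt (real k) * ln (real k)))
      \<le> norm (erw_mart i k x / ln (real k)) * sqrt 2) sequentially"
    using eventually_ge_at_top[of 1]
  proof eventually_elim
    case (elim k)
    have eq: "walk_coord i k x / (sqrt (real k) * ln (real k))
        = erw_scale k / sqrt (real k) * (erw_mart i k x / ln (real k))"
      using erw_scale_pos[of k] unfolding erw_mart_def by simp
    have "\<bar>erw_scale k / sqrt (real k)\<bar> \<le> sqrt 2"
      using erw_scale_le_sqrt[OF elim] erw_scale_pos[of k] elim by (simp add: divide_le_eq)
    then have "\<bar>erw_scale k / sqrt (real k)\<bar> * \<bar>erw_mart i k x / ln (real k)\<bar>
        \<le> sqrt 2 * \<bar>erw_mart i k x / ln (real k)\<bar>"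
      by (rule mult_right_mono) simp
    then show ?case
      unfolding eq real_norm_def abs_mult by (simp add: mult.commute)
  qed
qed

lemma abs_sum_le_of_tail_le:
  fixes a h :: "nat \<Rightarrow> real"
  assumes "mono h" and tail: "\<And>k. K \<le> k \<Longrightarrow> \<bar>a k\<bar> \<le> c * h k" and "c \<ge> 0" "h n \<ge> 0"
  shows "\<bar>\<Sum>k\<in>{1..n}. a k\<bar> \<le> real n * ((\<Sum>k<K. \<bar>a k\<bar>) + c * h n)"
proof -
  have term_le: "\<bar>a k\<bar> \<le> (\<Sum>k<K. \<bar>a k\<bar>) + c * h n" if "k \<in> {1..n}" for k
  proof (cases "k < K")
    case True
    then have "\<bar>a k\<bar> \<le> (\<Sum>k<K. \<bar>a k\<bar>)"
      by (intro member_le_sum) auto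
    then show ?thesis
      using assms(3,4) by (simp add: add_increasing2)
  next
    case False
    then have "\<bar>a k\<bar> \<le> c * h k"
      by (intro tail) simp
    also have "\<dots> \<le> c * h n"
      using that \<open>mono h\<close> \<open>c \<ge> 0\<close> by (simp add: mono_def mult_left_mono)
    finally show ?thesis
      by (simp add: add_increasing sum_nonneg)
  qed
  have "\<bar>\<Sum>k\<in>{1..n}. a k\<bar> \<le> (\<Sum>k\<in>{1..n}. \<bar>a k\<bar>)"
    by (rule sum_abs)
  also have "\<dots> \<le> (\<Sum>k\<in>{1..n}. (\<Sum>k<K. \<bar>a k\<bar>) + c * h n)"
    by (rule sum_mono[OF term_le])
  finally show ?thesis
    by simp
qed

lemma average_o_of_mono:
  fixes a h :: "nat \<Rightarrow> real"
  assumes "mono h" and h: "filterlim h at_top sequentially" and a: "(\<lambda>k. a k / h k) \<longlonglongrightarrow> 0"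
  shows "(\<lambda>n. (\<Sum>k\<in>{1..n}. a k) / (real n * h n)) \<longlonglongrightarrow> 0"
  unfolding tendsto_iff
proof (intro allI impI)
  fix e :: real
  assume "e > 0"
  have "eventually (\<lambda>k. \<bar>a k / h k\<bar> < e / 2 \<and> h k > 0) sequentially"
    using order_tendstoD(2)[OF tendsto_rabs_zero[OF a], of "e / 2"] \<open>e > 0\<close>
      filterlim_at_top_dense[THEN iffD1, OF h, rule_format, of 0]
    by (auto elim: eventually_conj)
  then obtain K where K: "\<And>k. k \<ge> K \<Longrightarrow> \<bar>a k / h k\<bar> < e / 2 \<and> h k > 0"
    unfolding eventually_sequentially by auto
  have tail: "\<bar>a k\<bar> \<le> e / 2 * h k" if "K \<le> k" for k
  proof -
    have "h k > 0" "\<bar>a k / h k\<bar> < e / 2"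
      using K[OF that] by blast+
    then have "\<bar>a k\<bar> / h k < e / 2"
      by (simp add: abs_div)
    then show ?thesis
      using \<open>h k > 0\<close> by (simp add: divide_less_eq less_imp_le)
  qed
  define C where "C = (\<Sum>k<K. \<bar>a k\<bar>)"
  have "((\<lambda>n. C / h n) \<longlongrightarrow> 0) sequentially"
    using filterlim_at_top_imp_at_infinity[OF h] by (intro tendsto_divide_0[OF tendsto_const])
  then have "eventually (\<lambda>n. C / h n < e / 2) sequentially"
    using \<open>e > 0\<close> by (intro order_tendstoD) auto
  moreover have "eventually (\<lambda>n. max K 1 \<le> n) sequentially"
    by (rule eventually_ge_at_top)
  ultimately show "eventually (\<lambda>n. dist ((\<Sum>k\<in>{1..n}. a k) / (real n * h n)) 0 < e) sequentially"
  proof eventually_elim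
    case (elim n)
    have "h n > 0"
      using K elim by simp
    then have "\<bar>\<Sum>k\<in>{1..n}. a k\<bar> / (real n * h n) \<le> real n * (C + e / 2 * h n) / (real n * h n)"
      using abs_sum_le_of_tail_le[OF \<open>mono h\<close> tail, where n = n] \<open>e > 0\<close> unfolding C_def
      by (intro divide_right_mono) auto
    also have "\<dots> = C / h n + e / 2"
      using \<open>h n > 0\<close> elim by (simp add: field_simps)
    also have "\<dots> < e"
      using elim(1) by linarith
    finally show ?case
      using \<open>h n > 0\<close> by (simp add: abs_div abs_mult)
  qed
qed

lemma mono_sqrt_mult_ln: "mono (\<lambda>n::nat. sqrt (real n) * ln (real n))"
proof (rule monoI)
  fix m n :: nat
  assume "m \<le> n"
  then show "sqrt (real m) * ln (real m) \<le> sqrt (real n) * ln (real n)"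
    by (cases "m = 0"; cases "n = 0") (auto intro!: mult_mono mult_nonneg_nonneg)
qed

lemma erw_G_nth: "erw_G X n \<omega> $ i = (\<Sum>k\<in>{1..n}. walk_coord i k (\<lambda>k. X k \<omega>)) / real n"
  unfolding erw_G_def erw_S_def walk_coord_def by simp

theorem theorem2p4:
  fixes M :: "'a measure" and X :: "nat \<Rightarrow> 'a \<Rightarrow> 'd::finite \<times> bool"
  assumes "is_erw M ((2 * real CARD('d) + 1) / (4 * real CARD('d))) X"
  shows "AE \<omega> in M. ((\<lambda>n. (1 / (sqrt (real n) * ln (real n))) *\<^sub>R erw_G X n \<omega>) \<longlongrightarrow> 0) sequentially"
  using AE_eventually_dyadic_small[OF assms refl]
proof (rule eventually_mono)
  fix \<omega>
  assume small: "\<forall>\<epsilon>>0. eventually (\<lambda>j. \<forall>i. dyadic_small (\<lambda>k. erw_mart i k (\<lambda>k. X k \<omega>)) \<epsilon> j) sequentially"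
  show "((\<lambda>n. (1 / (sqrt (real n) * ln (real n))) *\<^sub>R erw_G X n \<omega>) \<longlongrightarrow> 0) sequentially"
  proof (rule vec_tendstoI)
    fix i
    have "(\<lambda>k. erw_mart i k (\<lambda>k. X k \<omega>) / ln (real k)) \<longlonglongrightarrow> 0"
    proof (rule dyadic_small_imp_o_ln)
      fix \<epsilon> :: real
      assume "\<epsilon> > 0"
      then show "eventually (\<lambda>j. dyadic_small (\<lambda>k. erw_mart i k (\<lambda>k. X k \<omega>)) \<epsilon> j) sequentially"
        using small by (blast intro: eventually_mono)
    qed
    then have "(\<lambda>k. walk_coord i k (\<lambda>k. X k \<omega>) / (sqrt (real k) * ln (real k))) \<longlonglongrightarrow> 0"
      by (rule walk_coord_o_sqrt_ln)
    then have "(\<lambda>n. (\<Sum>k\<in>{1..n}. walk_coord i k (\<lambda>k. X k \<omega>)) / (real n * (sqrt (real n) * ln (real n)))) \<longlonglongrightarrow> 0"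
      by (intro average_o_of_mono mono_sqrt_mult_ln) real_asymp
    then show "((\<lambda>n. ((1 / (sqrt (real n) * ln (real n))) *\<^sub>R erw_G X n \<omega>) $ i) \<longlongrightarrow> 0 $ i) sequentially"
      by (simp add: erw_G_nth mult.commute)
  qed
qed

end
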